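(* Let $n\ge m\ge0$, let $\alpha,\beta$ be non-decreasing sequences of rational numbers with $\alpha_1=0$ and $(\alpha,\beta)$ non-resonant. Then the $\mathscr{D}_S$-module $\mathcal{H}^{n+m-1}_{\mathrm{dR}}(U/S,f)^{(G,\tilde\chi\times\rho)}$ (with its Gauss–Manin connection) admits as a cyclic vector the cohomology class of $$\omega=\prod_{i=2}^nx_i^{a_i}\prod_{j=1}^my_j^{-b_j}\,\frac{dx_2}{x_2}\wedge\cdots\wedge\frac{dx_n}{x_n}\wedge\frac{dy_1}{y_1}\wedge\cdots\wedge\frac{dy_m}{y_m}.$$
   Context: Varieties over $\mathbb{C}$. Non-resonant: $\alpha_i-\beta_j\notin\mathbb{Z}$ for all $i,j$. $S=\mathbb{G}_m\setminus\{1\}$ if $n=m$, $S=\mathbb{G}_m$ if $n>m$, coordinate $z$. $d\ge1$ common denominator of the $\alpha_i,\beta_j$, $a_i=d\alpha_i$, $b_j=d\beta_j$. $U=S\times\mathbb{G}_m^{n+m-1}$ with coordinates $(z,x_2,\dots,x_n,y_1,\dots,y_m)$, $\mathrm{pr}_z:U\to S$, $f=\sum_{i=2}^nx_i^d-\sum_jy_j^d+z\prod_jy_j^d/\prod_{i\ge2}x_i^d$. $\mathcal{H}^{n+m-1}_{\mathrm{dR}}(U/S,f)$ is the $(n+m-1)$-st cohomology of the relative twisted de Rham complex $(\Omega^\bullet_{U/S},d+df)$, with Gauss–Manin connection $D=\nabla_{z\partial_z}$, $\nabla_{z\partial_z}[g\eta]=[(z\partial_zg+z\partial_z(f)g)\eta]$.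 $G=\mu_d^{n+m-1}$ acts by multiplication on $x_2,\dots,x_n,y_1,\dots,y_m$ and by pullback on cohomology; $(G,\tilde\chi\times\rho)$ is the isotypic component on which $(\zeta_2,\dots,\zeta_n,\xi_1,\dots,\xi_m)$ acts by $\prod\zeta_i^{a_i}\prod\xi_j^{-b_j}$. A cyclic vector is a section $v$ such that $v,Dv,\dots$ generate the module over $\mathcal{O}_S$. *)

theory Defs
  imports "HOL-Library.Poly_Mapping" "HOL-Computational_Algebra.Polynomial"
          "HOL-Computational_Algebra.Computational_Algebra" "HOL-Computational_Algebra.Field_as_Ring"
begin

text \<open>Variables of the fibre torus: Inl i is x_i (2 \<le> i \<le> n), Inr j is y_j (1 \<le> j \<le> m).
  Exponent vectors are finitely supported integer vectors; regular functions on U are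
  Laurent polynomials in these variables with coefficients in O(S), where O(S) is
  realised inside the rational function field C(z) = complex poly fract.\<close>

type_synonym var = "nat + nat"
type_synonym coef = "complex poly fract"
type_synonym lpoly = "(var \<Rightarrow>\<^sub>0 int) \<Rightarrow>\<^sub>0 coef"

definition fvars :: "nat \<Rightarrow> nat \<Rightarrow> var set" where
  "fvars n m = Inl ` {2..n} \<union> Inr ` {1..m}"

definition zc :: coef where "zc = Fract [:0, 1:] 1"
definition cst :: "complex \<Rightarrow> coef" where "cst c = Fract [:c:] 1"

text \<open>O(S): S = G_m minus {1} if n = m, S = G_m if n > m.\<close>
definition OS :: "nat \<Rightarrow> nat \<Rightarrow> coef set" where
  "OS n m = {Fract p (monom 1 a * [:1, -1:] ^ b) | p a b. n = m \<or> b = 0}"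

text \<open>Regular functions on U = S \<times> G_m^(n+m-1).\<close>
definition OU :: "nat \<Rightarrow> nat \<Rightarrow> lpoly set" where
  "OU n m = {g. (\<forall>e \<in> Poly_Mapping.keys g. \<forall>v. Poly_Mapping.lookup e v \<noteq> 0 \<longrightarrow> v \<in> fvars n m)
               \<and> (\<forall>e. Poly_Mapping.lookup g e \<in> OS n m)}"

text \<open>The derivation z d/dz on C(z), via the normalised representative.\<close>
definition zD :: "coef \<Rightarrow> coef" where
  "zD q = (case quot_of_fract q of (p, r) \<Rightarrow>
     Fract (pCons 0 (pderiv p * r - p * pderiv r)) (r * r))"

definition zDL :: "lpoly \<Rightarrow> lpoly" where "zDL g = Poly_Mapping.map zD g"

definition theta :: "var \<Rightarrow> lpoly \<Rightarrow> lpoly" where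
  "theta v g = Poly_Mapping.mapp (\<lambda>e c. of_int (Poly_Mapping.lookup e v) * c) g"

definition scal :: "coef \<Rightarrow> lpoly \<Rightarrow> lpoly" where
  "scal c g = Poly_Mapping.single 0 c * g"

definition fpot :: "nat \<Rightarrow> nat \<Rightarrow> nat \<Rightarrow> lpoly" where
  "fpot n m d =
     (\<Sum>i\<in>{2..n}. Poly_Mapping.single (Poly_Mapping.single (Inl i) (int d)) 1)
   - (\<Sum>j\<in>{1..m}. Poly_Mapping.single (Poly_Mapping.single (Inr j) (int d)) 1)
   + Poly_Mapping.single
       ((\<Sum>j\<in>{1..m}. Poly_Mapping.single (Inr j) (int d))
        - (\<Sum>i\<in>{2..n}. Poly_Mapping.single (Inl i) (int d))) zc"

text \<open>Top-degree relative forms are g \<cdot> dx_2/x_2 \<and> ... \<and> dy_m/y_m, identified with g.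
  The image of d + df from degree n+m-2 consists of sums over the variables v of
  (x_v d/dx_v + x_v d/dx_v f) h_v.\<close>
definition exact_top :: "nat \<Rightarrow> nat \<Rightarrow> nat \<Rightarrow> lpoly set" where
  "exact_top n m d = {\<Sum>v\<in>fvars n m. theta v (h v) + theta v (fpot n m d) * h v
                       | h. \<forall>v\<in>fvars n m. h v \<in> OU n m}"

definition GM :: "nat \<Rightarrow> nat \<Rightarrow> nat \<Rightarrow> lpoly \<Rightarrow> lpoly" where
  "GM n m d g = zDL g + zDL (fpot n m d) * g"

text \<open>Pullback along multiplication by zeta \<in> mu_d^(n+m-1) (the dlog volume form is invariant).\<close>
definition gact :: "nat \<Rightarrow> nat \<Rightarrow> (var \<Rightarrow> complex) \<Rightarrow> lpoly \<Rightarrow> lpoly" where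
  "gact n m \<zeta> g = Poly_Mapping.mapp
     (\<lambda>e c. cst (\<Prod>v\<in>fvars n m. \<zeta> v powi Poly_Mapping.lookup e v) * c) g"

definition Gset :: "nat \<Rightarrow> nat \<Rightarrow> nat \<Rightarrow> (var \<Rightarrow> complex) set" where
  "Gset n m d = {\<zeta>. \<forall>v\<in>fvars n m. \<zeta> v ^ d = 1}"

text \<open>a_i = d alpha_i, b_j = d beta_j.\<close>
definition intmul :: "nat \<Rightarrow> rat \<Rightarrow> int" where
  "intmul d r = \<lfloor>of_nat d * r\<rfloor>"

definition chi :: "nat \<Rightarrow> nat \<Rightarrow> nat \<Rightarrow> (nat \<Rightarrow> rat) \<Rightarrow> (nat \<Rightarrow> rat)
                      \<Rightarrow> (var \<Rightarrow> complex) \<Rightarrow> complex" where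
  "chi n m d \<alpha> \<beta> \<zeta> = (\<Prod>i\<in>{2..n}. \<zeta> (Inl i) powi intmul d (\<alpha> i))
                      * (\<Prod>j\<in>{1..m}. \<zeta> (Inr j) powi (- intmul d (\<beta> j)))"

text \<open>Representatives of classes in the (G, chi~ \<times> rho)-isotypic component of
  H^{n+m-1}_dR(U/S, f): top forms whose class satisfies zeta^* [g] = chi(zeta) [g].\<close>
definition isotypic :: "nat \<Rightarrow> nat \<Rightarrow> nat \<Rightarrow> (nat \<Rightarrow> rat) \<Rightarrow> (nat \<Rightarrow> rat) \<Rightarrow> lpoly set" where
  "isotypic n m d \<alpha> \<beta> = {g \<in> OU n m. \<forall>\<zeta>\<in>Gset n m d.
       gact n m \<zeta> g - scal (cst (chi n m d \<alpha> \<beta> \<zeta>)) g \<in> exact_top n m d}"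

definition omega :: "nat \<Rightarrow> nat \<Rightarrow> nat \<Rightarrow> (nat \<Rightarrow> rat) \<Rightarrow> (nat \<Rightarrow> rat) \<Rightarrow> lpoly" where
  "omega n m d \<alpha> \<beta> = Poly_Mapping.single
     ((\<Sum>i\<in>{2..n}. Poly_Mapping.single (Inl i) (intmul d (\<alpha> i)))
      + (\<Sum>j\<in>{1..m}. Poly_Mapping.single (Inr j) (- intmul d (\<beta> j)))) 1"

definition cyclic_vector :: "nat \<Rightarrow> nat \<Rightarrow> nat \<Rightarrow> (nat \<Rightarrow> rat) \<Rightarrow> (nat \<Rightarrow> rat) \<Rightarrow> lpoly \<Rightarrow> bool" where
  "cyclic_vector n m d \<alpha> \<beta> w \<longleftrightarrow> w \<in> isotypic n m d \<alpha> \<beta> \<and>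
     (\<forall>g\<in>isotypic n m d \<alpha> \<beta>. \<exists>K c. (\<forall>k\<le>K. c k \<in> OS n m) \<and>
        g - (\<Sum>k\<le>K. scal (c k) ((GM n m d ^^ k) w)) \<in> exact_top n m d)"

end

theory Submission
  imports Defs "HOL-Analysis.Complex_Transcendental"
begin

text \<open>
  The group G acts diagonally on monomials, so a discrete Fourier argument with a primitive d-th root
  of unity shows that a class in the isotypic component is cohomologous to its part supported on the
  exponents congruent modulo d to the exponent E0 of omega; exact forms are stable under this
  projection because multiplication by theta_v f shifts exponents only by multiples of d.
  It therefore suffices to reach every monomial c x^(E0 + d (k, l)) with c in O(S).
  The iterate D^t omega is z^t x^(E0 + t delta) plus polynomial multiples of the earlier diagonal
  monomials x^(E0 + s delta), s < t, where z x^delta is the last term of f; as z is a unit on S,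
  every diagonal monomial is reached.
  The exact forms theta_v h + theta_v(f) h, for h a monomial c x^e, relate x^(e + d e_v),
  z x^(e + delta) and x^e, the latter with coefficient e_v/d. Non-resonance makes this coefficient
  nonzero whenever it has to be inverted, and an induction over the lattice propagates from the
  diagonal to all of it.
\<close>

abbreviation lookup :: "('a \<Rightarrow>\<^sub>0 'b::zero) \<Rightarrow> 'a \<Rightarrow> 'b" where
  "lookup \<equiv> Poly_Mapping.lookup"
abbreviation single :: "'a \<Rightarrow> 'b::zero \<Rightarrow> 'a \<Rightarrow>\<^sub>0 'b" where
  "single \<equiv> Poly_Mapping.single"
abbreviation keys :: "('a \<Rightarrow>\<^sub>0 'b::zero) \<Rightarrow> 'a set" where
  "keys \<equiv> Poly_Mapping.keys"

section \<open>The coefficient ring O(S) and the derivation z d/dz\<close>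

lemma zD_Fract:
  assumes "r \<noteq> 0"
  shows "zD (Fract p r) = Fract (pCons 0 (pderiv p * r - p * pderiv r)) (r * r)"
proof -
  obtain p0 r0 where q: "quot_of_fract (Fract p r) = (p0, r0)"
    by (cases "quot_of_fract (Fract p r)")
  have r0: "r0 \<noteq> 0"
    using snd_quot_of_fract_nonzero[of "Fract p r"] q by simp
  have "Fract p0 r0 = Fract p r"
    using Fract_quot_of_fract[of "Fract p r"] q by simp
  then have h: "p0 * r = p * r0"
    using r0 assms by (simp add: eq_fract)
  have "pderiv p0 * r + p0 * pderiv r = pderiv p * r0 + p * pderiv r0"
    using arg_cong[OF h, of pderiv] by (simp add: pderiv_mult algebra_simps)
  with h have "(pderiv p * r - p * pderiv r) * (r0 * r0) = (pderiv p0 * r0 - p0 * pderiv r0) * (r * r)"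
    by algebra
  then show ?thesis
    using r0 assms unfolding zD_def q by (simp add: eq_fract mult_pCons_left)
qed

lemma zD_Fract_1: "zD (Fract p 1) = Fract (pCons 0 (pderiv p)) 1"
  by (simp add: zD_Fract)

lemma zD_add: "zD (a + b) = zD a + zD b"
proof (cases a; cases b)
  fix p r p' r' :: "complex poly"
  assume a: "a = Fract p r" "r \<noteq> 0" and b: "b = Fract p' r'" "r' \<noteq> 0"
  then have "zD (a + b) = Fract (pCons 0 (pderiv (p * r' + p' * r) * (r * r')
      - (p * r' + p' * r) * pderiv (r * r'))) (r * r' * (r * r'))"
    by (simp add: zD_Fract)
  also have "\<dots> = zD a + zD b"
    using a b by (simp add: zD_Fract eq_fract mult_pCons_left pderiv_mult pderiv_add algebra_simps)
  finally show ?thesis .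
qed

lemma zD_0 [simp]: "zD 0 = 0"
  unfolding zD_def quot_of_fract_0 by (simp add: Zero_fract_def)

lemma zD_uminus: "zD (- a) = - zD a"
  by (metis add.right_inverse add_eq_0_iff zD_0 zD_add)

lemma zD_diff: "zD (a - b) = zD a - zD b"
  using zD_add[of a "- b"] by (simp add: zD_uminus)

lemma zD_1 [simp]: "zD 1 = 0"
  using zD_Fract_1[of 1] by (simp add: fract_collapse)

lemma zD_zc [simp]: "zD zc = zc"
  by (simp add: zc_def zD_Fract_1 pderiv_pCons)

lemma lookup_zDL: "lookup (zDL g) e = zD (lookup g e)"
  by (simp add: zDL_def Poly_Mapping.map.rep_eq when_def)

lemma zDL_add: "zDL (a + b) = zDL a + zDL b"
  by (rule poly_mapping_eqI) (simp add: lookup_zDL lookup_add zD_add)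

lemma zDL_diff: "zDL (a - b) = zDL a - zDL b"
  by (rule poly_mapping_eqI) (simp add: lookup_zDL lookup_minus zD_diff)

lemma zDL_0 [simp]: "zDL 0 = 0"
  by (rule poly_mapping_eqI) (simp add: lookup_zDL)

lemma zDL_sum: "zDL (\<Sum>x\<in>A. f x) = (\<Sum>x\<in>A. zDL (f x))"
  by (induction A rule: infinite_finite_induct) (auto simp: zDL_add)

lemma zDL_single: "zDL (single k a) = single k (zD a)"
  by (rule poly_mapping_eqI) (simp add: lookup_zDL lookup_single when_def)

lemma cst_mult: "cst a * cst b = cst (a * b)"
  by (simp add: cst_def mult.commute)

lemma cst_add: "cst a + cst b = cst (a + b)"
  by (simp add: cst_def)

lemma cst_diff: "cst a - cst b = cst (a - b)"
  by (simp add: cst_def)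

lemma cst_of_nat: "cst (of_nat k) = of_nat k"
  by (simp add: cst_def of_nat_fract of_nat_poly)

lemma cst_of_int: "cst (of_int k) = of_int k"
proof (cases k rule: int_cases)
  case (nonneg n)
  then show ?thesis using cst_of_nat[of n] by simp
next
  case (neg n)
  have "cst (- a) = - cst a" for a
    by (simp add: cst_def)
  then show ?thesis using neg cst_of_nat[of "Suc n"] by (metis of_int_minus of_int_of_nat_eq)
qed

lemma cst_1 [simp]: "cst 1 = 1"
  by (simp add: cst_def One_fract_def one_pCons)

lemma cst_divide_cancel: "x \<noteq> 0 \<Longrightarrow> y \<noteq> 0 \<Longrightarrow> cst (x / y) * (cst (y / x) * c) = c"
  by (simp add: mult.assoc[symmetric] cst_mult)

lemma OSI: "n = m \<or> b = 0 \<Longrightarrow> Fract p (monom 1 a * [:1, -1:] ^ b) \<in> OS n m"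
  unfolding OS_def by blast

lemma OSE:
  assumes "x \<in> OS n m"
  obtains p a b where "n = m \<or> b = 0" "x = Fract p (monom 1 a * [:1, -1:] ^ b)"
  using assms unfolding OS_def by blast

lemma Fract_poly_in_OS [simp]: "Fract p 1 \<in> OS n m"
  using OSI[of n m 0 p 0] by (simp add: monom_0 one_pCons)

lemma OS_0 [simp]: "0 \<in> OS n m"
  using Fract_poly_in_OS[of 0] by (simp add: fract_collapse)

lemma OS_1 [simp]: "1 \<in> OS n m"
  using Fract_poly_in_OS[of 1] by (simp add: fract_collapse)

lemma cst_in_OS [simp]: "cst c \<in> OS n m"
  unfolding cst_def by (rule Fract_poly_in_OS)

lemma zc_in_OS [simp]: "zc \<in> OS n m"
  unfolding zc_def by (rule Fract_poly_in_OS)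

lemma of_int_in_OS [simp]: "of_int k \<in> OS n m"
  using cst_in_OS[of "of_int k"] by (simp add: cst_of_int)

lemma z_power_inverse_in_OS: "Fract 1 (monom 1 t) \<in> OS n m"
  using OSI[of n m 0 1 t] by simp

lemma monom_mult_OS_denominator:
  "monom (1::complex) a * [:1, -1:] ^ b * (monom 1 a' * [:1, -1:] ^ b')
   = monom 1 (a + a') * [:1, -1:] ^ (b + b')"
  by (simp add: mult_monom power_add algebra_simps)

lemma OS_mult: assumes "x \<in> OS n m" "y \<in> OS n m" shows "x * y \<in> OS n m"
proof -
  obtain p a b where x: "n = m \<or> b = 0" "x = Fract p (monom 1 a * [:1, -1:] ^ b)"
    using assms(1) by (rule OSE)
  obtain p' a' b' where y: "n = m \<or> b' = 0" "y = Fract p' (monom 1 a' * [:1, -1:] ^ b')"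
    using assms(2) by (rule OSE)
  have "x * y = Fract (p * p') (monom 1 (a + a') * [:1, -1:] ^ (b + b'))"
    using x y by (simp add: monom_mult_OS_denominator)
  then show ?thesis using x y OSI[of n m "b + b'"] by auto
qed

lemma OS_add: assumes "x \<in> OS n m" "y \<in> OS n m" shows "x + y \<in> OS n m"
proof -
  obtain p a b where x: "n = m \<or> b = 0" "x = Fract p (monom 1 a * [:1, -1:] ^ b)"
    using assms(1) by (rule OSE)
  obtain p' a' b' where y: "n = m \<or> b' = 0" "y = Fract p' (monom 1 a' * [:1, -1:] ^ b')"
    using assms(2) by (rule OSE)
  have "x + y = Fract (p * (monom 1 a' * [:1, -1:] ^ b') + p' * (monom 1 a * [:1, -1:] ^ b))
                      (monom 1 (a + a') * [:1, -1:] ^ (b + b'))"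
    using x y by (simp add: monom_mult_OS_denominator)
  then show ?thesis using x y OSI[of n m "b + b'"] by auto
qed

section \<open>Laurent polynomials and exact forms\<close>

lemma lookup_theta: "lookup (theta v g) e = of_int (lookup e v) * lookup g e"
  by (simp add: theta_def lookup_mapp when_def in_keys_iff)

lemma theta_add: "theta v (a + b) = theta v a + theta v b"
  by (rule poly_mapping_eqI) (simp add: lookup_theta lookup_add algebra_simps)

lemma theta_0 [simp]: "theta v 0 = 0"
  by (rule poly_mapping_eqI) (simp add: lookup_theta)

lemma theta_diff: "theta v (a - b) = theta v a - theta v b"
  by (rule poly_mapping_eqI) (simp add: lookup_theta lookup_minus algebra_simps)

lemma theta_sum: "theta v (\<Sum>x\<in>A. f x) = (\<Sum>x\<in>A. theta v (f x))"
  by (induction A rule: infinite_finite_induct) (auto simp: theta_add)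

lemma theta_single: "theta v (single e a) = single e (of_int (lookup e v) * a)"
  by (rule poly_mapping_eqI) (simp add: lookup_theta lookup_single when_def)

lemma lookup_scal: "lookup (scal c g) e = c * lookup g e"
  by (simp add: scal_def mult_map_scale_conv_mult[symmetric] Poly_Mapping.map.rep_eq when_def)

lemma scal_add: "scal c (a + b) = scal c a + scal c b"
  by (simp add: scal_def distrib_left)

lemma scal_diff: "scal c (a - b) = scal c a - scal c b"
  by (simp add: scal_def right_diff_distrib)

lemma scal_sum: "scal c (\<Sum>x\<in>A. f x) = (\<Sum>x\<in>A. scal c (f x))"
  by (simp add: scal_def sum_distrib_left)

lemma scal_scal: "scal c (scal c' g) = scal (c * c') g"
  by (simp add: scal_def mult.assoc[symmetric] mult_single)

lemma scal_1 [simp]: "scal 1 g = g"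
  by (simp add: scal_def)

lemma scal_0 [simp]: "scal 0 g = 0"
  by (simp add: scal_def)

lemma scal_single: "scal c (single e a) = single e (c * a)"
  by (simp add: scal_def mult_single)

lemma scal_mult: "scal c (a * b) = a * scal c b"
  by (simp add: scal_def algebra_simps)

lemma scal_add_left: "scal (c + c') g = scal c g + scal c' g"
  by (simp add: scal_def single_add distrib_right)

lemma scal_minus_1: "scal (- 1) g = - g"
  by (simp add: scal_def single_uminus)

lemma theta_scal: "theta v (scal c g) = scal c (theta v g)"
  by (rule poly_mapping_eqI) (simp add: lookup_theta lookup_scal algebra_simps)

lemma lookup_gact: "lookup (gact n m z g) e = cst (\<Prod>v\<in>fvars n m. z v powi lookup e v) * lookup g e"
  by (simp add: gact_def lookup_mapp when_def in_keys_iff)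

lemma gact_single: "gact n m z (single e a) = single e (cst (\<Prod>v\<in>fvars n m. z v powi lookup e v) * a)"
  by (rule poly_mapping_eqI) (simp add: lookup_gact lookup_single when_def)

lemma poly_mapping_sum_single: "g = (\<Sum>e\<in>keys g. single e (lookup g e))"
  by (rule poly_mapping_eqI)
     (auto simp: lookup_sum lookup_single when_def in_keys_iff sum.If_cases Int_absorb1)

definition restrict_exps :: "((var \<Rightarrow>\<^sub>0 int) \<Rightarrow> bool) \<Rightarrow> lpoly \<Rightarrow> lpoly" where
  "restrict_exps C g = Poly_Mapping.mapp (\<lambda>e c. if C e then c else 0) g"

lemma lookup_restrict_exps: "lookup (restrict_exps C g) e = (if C e then lookup g e else 0)"
  by (simp add: restrict_exps_def lookup_mapp when_def in_keys_iff)

lemma restrict_exps_True [simp]: "restrict_exps (\<lambda>_. True) g = g"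
  by (rule poly_mapping_eqI) (simp add: lookup_restrict_exps)

lemma restrict_exps_add: "restrict_exps C (a + b) = restrict_exps C a + restrict_exps C b"
  by (rule poly_mapping_eqI) (simp add: lookup_restrict_exps lookup_add)

lemma restrict_exps_diff: "restrict_exps C (a - b) = restrict_exps C a - restrict_exps C b"
  by (rule poly_mapping_eqI) (simp add: lookup_restrict_exps lookup_minus)

lemma restrict_exps_sum: "restrict_exps C (\<Sum>x\<in>A. f x) = (\<Sum>x\<in>A. restrict_exps C (f x))"
  by (rule poly_mapping_eqI) (simp add: lookup_restrict_exps lookup_sum)

lemma restrict_exps_single: "restrict_exps C (single e a) = (if C e then single e a else 0)"
  by (rule poly_mapping_eqI) (simp add: lookup_restrict_exps lookup_single when_def)

lemma restrict_exps_theta: "restrict_exps C (theta v g) = theta v (restrict_exps C g)"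
  by (rule poly_mapping_eqI) (simp add: lookup_restrict_exps lookup_theta)

lemma restrict_exps_mult_single:
  assumes "\<And>e. C (k + e) = C e"
  shows "restrict_exps C (single k a * h) = single k a * restrict_exps C h"
proof -
  have "single k a * h = (\<Sum>e\<in>keys h. single (k + e) (a * lookup h e))"
    by (subst poly_mapping_sum_single[of h]) (simp add: sum_distrib_left mult_single)
  then have "restrict_exps C (single k a * h)
      = (\<Sum>e\<in>keys h. if C e then single (k + e) (a * lookup h e) else 0)"
    by (simp add: restrict_exps_sum restrict_exps_single assms)
  also have "\<dots> = single k a * restrict_exps C h"
    by (subst poly_mapping_sum_single[of h])
       (simp add: restrict_exps_sum restrict_exps_single sum_distrib_left mult_single if_distrib
         cong: if_cong)
  finally show ?thesis .
qed

lemma finite_fvars [simp]: "finite (fvars n m)"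
  by (simp add: fvars_def)

lemma OUI:
  "(\<And>e. e \<in> keys g \<Longrightarrow> keys e \<subseteq> fvars n m) \<Longrightarrow> (\<And>e. lookup g e \<in> OS n m) \<Longrightarrow> g \<in> OU n m"
  unfolding OU_def by (blast dest: in_keys_iff[THEN iffD2])

lemma OU_keys: "g \<in> OU n m \<Longrightarrow> e \<in> keys g \<Longrightarrow> keys e \<subseteq> fvars n m"
  unfolding OU_def by (auto simp: in_keys_iff)

lemma OU_lookup: "g \<in> OU n m \<Longrightarrow> lookup g e \<in> OS n m"
  unfolding OU_def by blast

lemma single_in_OU: "keys e \<subseteq> fvars n m \<Longrightarrow> c \<in> OS n m \<Longrightarrow> single e c \<in> OU n m"
  by (rule OUI) (auto simp: lookup_single when_def split: if_splits)

lemma OU_add: "a \<in> OU n m \<Longrightarrow> b \<in> OU n m \<Longrightarrow> a + b \<in> OU n m"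
  by (rule OUI) (use keys_add[of a b] in \<open>auto simp: lookup_add OS_add OU_lookup dest: OU_keys\<close>)

lemma OU_scal: "c \<in> OS n m \<Longrightarrow> a \<in> OU n m \<Longrightarrow> scal c a \<in> OU n m"
  by (rule OUI) (auto simp: lookup_scal OS_mult OU_lookup in_keys_iff dest: OU_keys)

lemma restrict_exps_in_OU: "a \<in> OU n m \<Longrightarrow> restrict_exps C a \<in> OU n m"
  by (rule OUI) (auto simp: lookup_restrict_exps OU_lookup in_keys_iff dest: OU_keys split: if_splits)

lemma exact_topI:
  "(\<And>v. v \<in> fvars n m \<Longrightarrow> h v \<in> OU n m) \<Longrightarrow>
   (\<Sum>v\<in>fvars n m. theta v (h v) + theta v (fpot n m d) * h v) \<in> exact_top n m d"
  unfolding exact_top_def by blast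

lemma exact_topE:
  assumes "g \<in> exact_top n m d"
  obtains h where "\<And>v. v \<in> fvars n m \<Longrightarrow> h v \<in> OU n m"
    "g = (\<Sum>v\<in>fvars n m. theta v (h v) + theta v (fpot n m d) * h v)"
proof -
  from assms obtain h where "\<forall>v\<in>fvars n m. h v \<in> OU n m"
    "g = (\<Sum>v\<in>fvars n m. theta v (h v) + theta v (fpot n m d) * h v)"
    unfolding exact_top_def by blast
  then show thesis using that by blast
qed

lemma exact_top_0 [simp]: "0 \<in> exact_top n m d"
  using exact_topI[of n m "\<lambda>_. 0" d] OUI[of 0] by simp

lemma exact_top_add:
  assumes "a \<in> exact_top n m d" "b \<in> exact_top n m d"
  shows "a + b \<in> exact_top n m d"
proof -
  obtain h where h: "\<And>v. v \<in> fvars n m \<Longrightarrow> h v \<in> OU n m"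
    "a = (\<Sum>v\<in>fvars n m. theta v (h v) + theta v (fpot n m d) * h v)"
    using exact_topE[OF assms(1)] by blast
  obtain h' where h': "\<And>v. v \<in> fvars n m \<Longrightarrow> h' v \<in> OU n m"
    "b = (\<Sum>v\<in>fvars n m. theta v (h' v) + theta v (fpot n m d) * h' v)"
    using exact_topE[OF assms(2)] by blast
  have "a + b = (\<Sum>v\<in>fvars n m. theta v (h v + h' v) + theta v (fpot n m d) * (h v + h' v))"
    unfolding h(2) h'(2) sum.distrib[symmetric] by (simp add: theta_add algebra_simps)
  then show ?thesis
    using exact_topI[of n m "\<lambda>v. h v + h' v" d] by (simp add: OU_add h h')
qed

lemma exact_top_scal:
  assumes "c \<in> OS n m" "a \<in> exact_top n m d"
  shows "scal c a \<in> exact_top n m d"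
proof -
  obtain h where h: "\<And>v. v \<in> fvars n m \<Longrightarrow> h v \<in> OU n m"
    "a = (\<Sum>v\<in>fvars n m. theta v (h v) + theta v (fpot n m d) * h v)"
    using exact_topE[OF assms(2)] by blast
  have "scal c a = (\<Sum>v\<in>fvars n m. theta v (scal c (h v)) + theta v (fpot n m d) * scal c (h v))"
    unfolding h(2) by (simp add: scal_sum scal_add theta_scal scal_mult)
  then show ?thesis
    using exact_topI[of n m "\<lambda>v. scal c (h v)" d] by (simp add: OU_scal h assms(1))
qed

lemma exact_top_sum:
  "(\<And>x. x \<in> A \<Longrightarrow> f x \<in> exact_top n m d) \<Longrightarrow> (\<Sum>x\<in>A. f x) \<in> exact_top n m d"
  by (induction A rule: infinite_finite_induct) (auto intro: exact_top_add)

lemma exact_top_var: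
  assumes "v \<in> fvars n m" "h \<in> OU n m"
  shows "theta v h + theta v (fpot n m d) * h \<in> exact_top n m d"
proof -
  have "(\<Sum>w\<in>fvars n m. theta w (if w = v then h else 0) + theta w (fpot n m d) * (if w = v then h else 0))
      = (\<Sum>w\<in>fvars n m. if w = v then theta v h + theta v (fpot n m d) * h else 0)"
    by (rule sum.cong) auto
  also have "\<dots> = theta v h + theta v (fpot n m d) * h"
    using assms(1) by simp
  finally show ?thesis
    using exact_topI[of n m "\<lambda>w. if w = v then h else 0" d] assms(2) OUI[of 0] by auto
qed

definition fpot_zexp :: "nat \<Rightarrow> nat \<Rightarrow> nat \<Rightarrow> var \<Rightarrow>\<^sub>0 int" where
  "fpot_zexp n m d = (\<Sum>j\<in>{1..m}. single (Inr j) (int d)) - (\<Sum>i\<in>{2..n}. single (Inl i) (int d))"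

lemma lookup_fpot_zexp: "lookup (fpot_zexp n m d) v = (case v of
    Inl i \<Rightarrow> if i \<in> {2..n} then - int d else 0
  | Inr j \<Rightarrow> if j \<in> {1..m} then int d else 0)"
  by (simp add: fpot_zexp_def lookup_minus lookup_sum lookup_single when_def split: sum.split)

lemma fpot_eq: "fpot n m d = (\<Sum>i\<in>{2..n}. single (single (Inl i) (int d)) 1)
   - (\<Sum>j\<in>{1..m}. single (single (Inr j) (int d)) 1) + single (fpot_zexp n m d) zc"
  by (simp add: fpot_def fpot_zexp_def)

lemma zDL_fpot: "zDL (fpot n m d) = single (fpot_zexp n m d) zc"
  by (simp add: fpot_eq zDL_add zDL_diff zDL_sum zDL_single)

lemma theta_single_power_sum:
  "theta v (\<Sum>u\<in>U. single (single u (int d)) 1) = (if v \<in> U then single (single v (int d)) (of_nat d) else 0)"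
  if "finite U"
proof -
  have "theta v (single (single u (int d)) 1) = (if u = v then single (single v (int d)) (of_nat d) else 0)" for u
    by (simp add: theta_single lookup_single when_def)
  then show ?thesis
    using that by (simp add: theta_sum)
qed

lemma theta_fpot_Inl:
  assumes "i \<in> {2..n}"
  shows "theta (Inl i) (fpot n m d)
    = single (single (Inl i) (int d)) (of_nat d) - single (fpot_zexp n m d) (of_nat d * zc)"
  using assms theta_single_power_sum[of "Inl ` {2..n}" "Inl i" d]
    theta_single_power_sum[of "Inr ` {1..m}" "Inl i" d]
  by (simp add: fpot_eq theta_add theta_diff theta_single lookup_fpot_zexp single_uminus
      sum.reindex image_iff)

lemma theta_fpot_Inr:
  assumes "j \<in> {1..m}"
  shows "theta (Inr j) (fpot n m d)
    = single (fpot_zexp n m d) (of_nat d * zc) - single (single (Inr j) (int d)) (of_nat d)"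
  using assms theta_single_power_sum[of "Inl ` {2..n}" "Inr j" d]
    theta_single_power_sum[of "Inr ` {1..m}" "Inr j" d]
  by (simp add: fpot_eq theta_add theta_diff theta_single lookup_fpot_zexp
      sum.reindex image_iff)

text \<open>Multiplication by theta_v f only shifts exponents by multiples of d, so the exact forms
  are stable under restriction to any union of cosets of d times the exponent lattice.\<close>

lemma exact_top_restrict_exps:
  assumes periodic: "\<And>k e. (\<forall>v. int d dvd lookup k v) \<Longrightarrow> C (k + e) = C e"
    and "a \<in> exact_top n m d"
  shows "restrict_exps C a \<in> exact_top n m d"
proof -
  obtain h where h: "\<And>v. v \<in> fvars n m \<Longrightarrow> h v \<in> OU n m"
    "a = (\<Sum>v\<in>fvars n m. theta v (h v) + theta v (fpot n m d) * h v)"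
    using exact_topE[OF assms(2)] by blast
  have dvd_power: "\<forall>v. int d dvd lookup (single w (int d)) v" for w
    by (simp add: lookup_single when_def)
  have dvd_zexp: "\<forall>v. int d dvd lookup (fpot_zexp n m d) v"
    by (simp add: lookup_fpot_zexp split: sum.split)
  have commute: "restrict_exps C (theta v (fpot n m d) * g) = theta v (fpot n m d) * restrict_exps C g"
    if "v \<in> fvars n m" for v g
    using that unfolding fvars_def
    by (auto simp: theta_fpot_Inl theta_fpot_Inr left_diff_distrib restrict_exps_diff
        restrict_exps_mult_single periodic dvd_power dvd_zexp)
  have "restrict_exps C a
      = (\<Sum>v\<in>fvars n m. theta v (restrict_exps C (h v)) + theta v (fpot n m d) * restrict_exps C (h v))"
    unfolding h(2) restrict_exps_sum restrict_exps_add by (simp add: restrict_exps_theta commute)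
  then show ?thesis
    using exact_topI[of n m "\<lambda>v. restrict_exps C (h v)" d] by (simp add: restrict_exps_in_OU h)
qed

lemma cst_inverse_of_nat: "d \<ge> 1 \<Longrightarrow> of_nat d * (cst (1 / of_nat d) * c) = c"
  by (simp add: cst_of_nat[symmetric] mult.assoc[symmetric] cst_mult)

lemma of_int_mult_cst_divide: "of_int k * (cst (1 / y) * c) = cst (of_int k / y) * c"
  by (simp add: cst_of_int[symmetric] mult.assoc[symmetric] cst_mult)

lemma exact_relation_x:
  assumes "i \<in> {2..n}" "keys e \<subseteq> fvars n m" "c \<in> OS n m" "d \<ge> 1"
  shows "single (single (Inl i) (int d) + e) c + single e (cst (of_int (lookup e (Inl i)) / of_nat d) * c)
     - single (fpot_zexp n m d + e) (zc * c) \<in> exact_top n m d"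
proof -
  let ?h = "single e (cst (1 / of_nat d) * c)"
  have c1: "of_nat d * (cst (1 / of_nat d) * c) = c" and c2: "of_nat d * zc * (cst (1 / of_nat d) * c) = zc * c"
    using cst_inverse_of_nat[OF assms(4)] by (simp_all add: algebra_simps)
  have "theta (Inl i) ?h + theta (Inl i) (fpot n m d) * ?h =
    single (single (Inl i) (int d) + e) c + single e (cst (of_int (lookup e (Inl i)) / of_nat d) * c)
     - single (fpot_zexp n m d + e) (zc * c)"
    using assms(1) by (simp add: theta_single theta_fpot_Inl left_diff_distrib mult_single of_int_mult_cst_divide c1 c2)
  moreover have "theta (Inl i) ?h + theta (Inl i) (fpot n m d) * ?h \<in> exact_top n m d"
    using assms by (intro exact_top_var single_in_OU) (auto simp: fvars_def OS_mult)
  ultimately show ?thesis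
    by simp
qed

lemma exact_relation_y:
  assumes "j \<in> {1..m}" "keys e \<subseteq> fvars n m" "c \<in> OS n m" "d \<ge> 1"
  shows "single e (cst (of_int (lookup e (Inr j)) / of_nat d) * c) - single (single (Inr j) (int d) + e) c
     + single (fpot_zexp n m d + e) (zc * c) \<in> exact_top n m d"
proof -
  let ?h = "single e (cst (1 / of_nat d) * c)"
  have c1: "of_nat d * (cst (1 / of_nat d) * c) = c" and c2: "of_nat d * zc * (cst (1 / of_nat d) * c) = zc * c"
    using cst_inverse_of_nat[OF assms(4)] by (simp_all add: algebra_simps)
  have "theta (Inr j) ?h + theta (Inr j) (fpot n m d) * ?h =
    single e (cst (of_int (lookup e (Inr j)) / of_nat d) * c) - single (single (Inr j) (int d) + e) c
     + single (fpot_zexp n m d + e) (zc * c)"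
    using assms(1) by (simp add: theta_single theta_fpot_Inr left_diff_distrib mult_single of_int_mult_cst_divide c1 c2)
  moreover have "theta (Inr j) ?h + theta (Inr j) (fpot n m d) * ?h \<in> exact_top n m d"
    using assms by (intro exact_top_var single_in_OU) (auto simp: fvars_def OS_mult)
  ultimately show ?thesis
    by simp
qed

section \<open>The span of the iterates of the Gauss--Manin connection\<close>

definition gm_span :: "nat \<Rightarrow> nat \<Rightarrow> nat \<Rightarrow> lpoly \<Rightarrow> lpoly set" where
  "gm_span n m d w = {g. \<exists>K c. (\<forall>k\<le>K. c k \<in> OS n m) \<and>
      g - (\<Sum>k\<le>K. scal (c k) ((GM n m d ^^ k) w)) \<in> exact_top n m d}"

lemma gm_spanI:
  "(\<forall>k\<le>K. c k \<in> OS n m) \<Longrightarrow> g - (\<Sum>k\<le>K. scal (c k) ((GM n m d ^^ k) w)) \<in> exact_top n m d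
   \<Longrightarrow> g \<in> gm_span n m d w"
  unfolding gm_span_def by blast

lemma exact_top_subset_gm_span: "g \<in> exact_top n m d \<Longrightarrow> g \<in> gm_span n m d w"
  by (rule gm_spanI[of 0 "\<lambda>_. 0"]) auto

lemma GM_iterate_in_gm_span: "(GM n m d ^^ k) w \<in> gm_span n m d w"
proof (rule gm_spanI[of k "\<lambda>j. if j = k then 1 else 0"])
  have "(\<Sum>j\<le>k. scal (if j = k then 1 else 0) ((GM n m d ^^ j) w)) = (GM n m d ^^ k) w"
    by (simp add: if_distrib[of "\<lambda>c. scal c _"] cong: if_cong)
  then show "(GM n m d ^^ k) w - (\<Sum>j\<le>k. scal (if j = k then 1 else 0) ((GM n m d ^^ j) w))
      \<in> exact_top n m d"
    by simp
qed simp

lemma sum_atMost_extend_zero: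
  fixes K K' :: nat
  assumes "K' \<le> K"
  shows "(\<Sum>k\<le>K. scal (if k \<le> K' then c k else 0) (X k)) = (\<Sum>k\<le>K'. scal (c k) (X k))"
  by (rule sum.mono_neutral_cong_right) (use assms in auto)

lemma gm_span_add:
  assumes "a \<in> gm_span n m d w" "b \<in> gm_span n m d w"
  shows "a + b \<in> gm_span n m d w"
proof -
  let ?X = "\<lambda>k. (GM n m d ^^ k) w"
  obtain K1 c1 where 1: "\<forall>k\<le>K1. c1 k \<in> OS n m" "a - (\<Sum>k\<le>K1. scal (c1 k) (?X k)) \<in> exact_top n m d"
    using assms(1) unfolding gm_span_def by blast
  obtain K2 c2 where 2: "\<forall>k\<le>K2. c2 k \<in> OS n m" "b - (\<Sum>k\<le>K2. scal (c2 k) (?X k)) \<in> exact_top n m d"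
    using assms(2) unfolding gm_span_def by blast
  define c where "c k = (if k \<le> K1 then c1 k else 0) + (if k \<le> K2 then c2 k else 0)" for k
  have "(\<Sum>k\<le>K1+K2. scal (c k) (?X k)) = (\<Sum>k\<le>K1. scal (c1 k) (?X k)) + (\<Sum>k\<le>K2. scal (c2 k) (?X k))"
    unfolding c_def scal_add_left sum.distrib by (simp add: sum_atMost_extend_zero)
  then have "a + b - (\<Sum>k\<le>K1+K2. scal (c k) (?X k))
      = (a - (\<Sum>k\<le>K1. scal (c1 k) (?X k))) + (b - (\<Sum>k\<le>K2. scal (c2 k) (?X k)))"
    by simp
  then have "a + b - (\<Sum>k\<le>K1+K2. scal (c k) (?X k)) \<in> exact_top n m d"
    using exact_top_add[OF 1(2) 2(2)] by (simp only:)
  moreover have "\<forall>k\<le>K1 + K2. c k \<in> OS n m"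
    using 1(1) 2(1) by (auto simp: c_def intro: OS_add)
  ultimately show ?thesis
    by (intro gm_spanI)
qed

lemma gm_span_scal:
  assumes "c0 \<in> OS n m" "a \<in> gm_span n m d w"
  shows "scal c0 a \<in> gm_span n m d w"
proof -
  let ?X = "\<lambda>k. (GM n m d ^^ k) w"
  obtain K c where c: "\<forall>k\<le>K. c k \<in> OS n m" "a - (\<Sum>k\<le>K. scal (c k) (?X k)) \<in> exact_top n m d"
    using assms(2) unfolding gm_span_def by blast
  have "scal c0 a - (\<Sum>k\<le>K. scal (c0 * c k) (?X k)) = scal c0 (a - (\<Sum>k\<le>K. scal (c k) (?X k)))"
    by (simp add: scal_diff scal_sum scal_scal)
  then show ?thesis
    using c assms(1) by (intro gm_spanI[of K "\<lambda>k. c0 * c k"]) (auto intro: OS_mult exact_top_scal)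
qed

lemma gm_span_diff:
  assumes "a \<in> gm_span n m d w" "b \<in> gm_span n m d w"
  shows "a - b \<in> gm_span n m d w"
  using gm_span_add[OF assms(1) gm_span_scal[OF of_int_in_OS assms(2), of "- 1"]]
  by (simp add: scal_minus_1)

lemma gm_span_sum:
  "(\<And>x. x \<in> A \<Longrightarrow> f x \<in> gm_span n m d w) \<Longrightarrow> (\<Sum>x\<in>A. f x) \<in> gm_span n m d w"
  by (induction A rule: infinite_finite_induct)
     (auto intro: gm_span_add exact_top_subset_gm_span)

definition lattice_exp ::
    "nat \<Rightarrow> nat \<Rightarrow> nat \<Rightarrow> (nat \<Rightarrow> rat) \<Rightarrow> (nat \<Rightarrow> rat) \<Rightarrow> (nat \<Rightarrow> int) \<Rightarrow> (nat \<Rightarrow> int) \<Rightarrow> var \<Rightarrow>\<^sub>0 int" where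
  "lattice_exp n m d \<alpha> \<beta> k l = (\<Sum>i\<in>{2..n}. single (Inl i) (intmul d (\<alpha> i) + int d * k i))
      + (\<Sum>j\<in>{1..m}. single (Inr j) (- intmul d (\<beta> j) + int d * l j))"

abbreviation omega_exp :: "nat \<Rightarrow> nat \<Rightarrow> nat \<Rightarrow> (nat \<Rightarrow> rat) \<Rightarrow> (nat \<Rightarrow> rat) \<Rightarrow> var \<Rightarrow>\<^sub>0 int" where
  "omega_exp n m d \<alpha> \<beta> \<equiv> lattice_exp n m d \<alpha> \<beta> (\<lambda>_. 0) (\<lambda>_. 0)"

abbreviation diag_exp :: "nat \<Rightarrow> nat \<Rightarrow> nat \<Rightarrow> (nat \<Rightarrow> rat) \<Rightarrow> (nat \<Rightarrow> rat) \<Rightarrow> nat \<Rightarrow> var \<Rightarrow>\<^sub>0 int" where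
  "diag_exp n m d \<alpha> \<beta> t \<equiv> lattice_exp n m d \<alpha> \<beta> (\<lambda>_. - int t) (\<lambda>_. int t)"

lemma lookup_lattice_exp: "lookup (lattice_exp n m d \<alpha> \<beta> k l) v = (case v of
    Inl i \<Rightarrow> if i \<in> {2..n} then intmul d (\<alpha> i) + int d * k i else 0
  | Inr j \<Rightarrow> if j \<in> {1..m} then - intmul d (\<beta> j) + int d * l j else 0)"
  by (simp add: lattice_exp_def lookup_add lookup_sum lookup_single when_def split: sum.split)

lemma keys_lattice_exp: "keys (lattice_exp n m d \<alpha> \<beta> k l) \<subseteq> fvars n m"
proof
  fix v
  assume "v \<in> keys (lattice_exp n m d \<alpha> \<beta> k l)"
  then show "v \<in> fvars n m"
    by (auto simp: in_keys_iff lookup_lattice_exp fvars_def split: sum.splits if_splits)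
qed

lemma lattice_exp_cong:
  "(\<forall>i\<in>{2..n}. k i = k' i) \<Longrightarrow> (\<forall>j\<in>{1..m}. l j = l' j)
   \<Longrightarrow> lattice_exp n m d \<alpha> \<beta> k l = lattice_exp n m d \<alpha> \<beta> k' l'"
  unfolding lattice_exp_def by (intro arg_cong2[where f = "(+)"] sum.cong) auto

lemma lattice_exp_step_x:
  "i \<in> {2..n} \<Longrightarrow> lattice_exp n m d \<alpha> \<beta> (k(i := k i + 1)) l = single (Inl i) (int d) + lattice_exp n m d \<alpha> \<beta> k l"
  by (rule poly_mapping_eqI)
     (auto simp: lookup_lattice_exp lookup_add lookup_single when_def algebra_simps split: sum.split)

lemma lattice_exp_step_y:
  "j \<in> {1..m} \<Longrightarrow> lattice_exp n m d \<alpha> \<beta> k (l(j := l j + 1)) = single (Inr j) (int d) + lattice_exp n m d \<alpha> \<beta> k l"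
  by (rule poly_mapping_eqI)
     (auto simp: lookup_lattice_exp lookup_add lookup_single when_def algebra_simps split: sum.split)

lemma lattice_exp_step_diag:
  "lattice_exp n m d \<alpha> \<beta> (\<lambda>i. k i - 1) (\<lambda>j. l j + 1) = fpot_zexp n m d + lattice_exp n m d \<alpha> \<beta> k l"
  by (rule poly_mapping_eqI)
     (auto simp: lookup_lattice_exp lookup_add lookup_fpot_zexp algebra_simps split: sum.split)

lemma diag_exp_Suc: "diag_exp n m d \<alpha> \<beta> (Suc t) = fpot_zexp n m d + diag_exp n m d \<alpha> \<beta> t"
proof -
  have "diag_exp n m d \<alpha> \<beta> (Suc t) = lattice_exp n m d \<alpha> \<beta> (\<lambda>i. - int t - 1) (\<lambda>j. int t + 1)"
    by (rule lattice_exp_cong) auto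
  then show ?thesis
    by (simp add: lattice_exp_step_diag)
qed

lemma omega_eq_single: "omega n m d \<alpha> \<beta> = single (omega_exp n m d \<alpha> \<beta>) 1"
  by (simp add: omega_def lattice_exp_def)

lemma GM_single_poly: "GM n m d (single e (Fract p 1)) =
   single e (Fract (pCons 0 (pderiv p)) 1) + single (fpot_zexp n m d + e) (Fract (pCons 0 p) 1)"
  by (simp add: GM_def zDL_single zD_Fract_1 zDL_fpot mult_single zc_def)

lemma GM_add: "GM n m d (a + b) = GM n m d a + GM n m d b"
  by (simp add: GM_def zDL_add algebra_simps)

inductive below_diag :: "nat \<Rightarrow> nat \<Rightarrow> nat \<Rightarrow> (nat \<Rightarrow> rat) \<Rightarrow> (nat \<Rightarrow> rat) \<Rightarrow> nat \<Rightarrow> lpoly \<Rightarrow> bool"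
  for n m d \<alpha> \<beta> t where
  zero: "below_diag n m d \<alpha> \<beta> t 0"
| add_single: "below_diag n m d \<alpha> \<beta> t g \<Longrightarrow> s < t
    \<Longrightarrow> below_diag n m d \<alpha> \<beta> t (g + single (diag_exp n m d \<alpha> \<beta> s) (Fract p 1))"

lemma below_diag_single: "s < t \<Longrightarrow> below_diag n m d \<alpha> \<beta> t (single (diag_exp n m d \<alpha> \<beta> s) (Fract p 1))"
  using below_diag.add_single[OF below_diag.zero] by simp

lemma below_diag_add:
  "below_diag n m d \<alpha> \<beta> t b \<Longrightarrow> below_diag n m d \<alpha> \<beta> t a \<Longrightarrow> below_diag n m d \<alpha> \<beta> t (a + b)"
proof (induction rule: below_diag.induct)
  case (add_single g s p)
  then show ?case
    using below_diag.add_single[of n m d \<alpha> \<beta> t "a + g" s p] by (simp add: add.assoc)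
qed simp

lemma below_diag_GM: "below_diag n m d \<alpha> \<beta> t g \<Longrightarrow> below_diag n m d \<alpha> \<beta> (Suc t) (GM n m d g)"
proof (induction rule: below_diag.induct)
  case zero
  then show ?case
    by (simp add: GM_def below_diag.zero)
next
  case (add_single g s p)
  then show ?case
    by (simp only: GM_add GM_single_poly diag_exp_Suc[symmetric])
       (intro below_diag_add below_diag_single; simp)
qed

lemma below_diag_in_gm_span:
  "below_diag n m d \<alpha> \<beta> t g
   \<Longrightarrow> (\<And>s c. s < t \<Longrightarrow> c \<in> OS n m \<Longrightarrow> single (diag_exp n m d \<alpha> \<beta> s) c \<in> gm_span n m d w)
   \<Longrightarrow> g \<in> gm_span n m d w"
proof (induction rule: below_diag.induct)
  case zero
  then show ?case
    by (simp add: exact_top_subset_gm_span)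
next
  case (add_single g s p)
  then show ?case
    by (simp add: gm_span_add)
qed

lemma GM_iterate_omega:
  "\<exists>r. below_diag n m d \<alpha> \<beta> t r \<and>
     (GM n m d ^^ t) (omega n m d \<alpha> \<beta>) = single (diag_exp n m d \<alpha> \<beta> t) (Fract (monom 1 t) 1) + r"
proof (induction t)
  case 0
  show ?case
    by (intro exI[of _ 0]) (simp add: below_diag.zero omega_eq_single monom_0 fract_collapse flip: one_pCons)
next
  case (Suc t)
  then obtain r where r: "below_diag n m d \<alpha> \<beta> t r"
    "(GM n m d ^^ t) (omega n m d \<alpha> \<beta>) = single (diag_exp n m d \<alpha> \<beta> t) (Fract (monom 1 t) 1) + r"
    by blast
  let ?r = "single (diag_exp n m d \<alpha> \<beta> t) (Fract (pCons 0 (pderiv (monom 1 t))) 1) + GM n m d r"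
  have "(GM n m d ^^ Suc t) (omega n m d \<alpha> \<beta>) = single (diag_exp n m d \<alpha> \<beta> (Suc t)) (Fract (monom 1 (Suc t)) 1) + ?r"
    using r(2) by (simp only: funpow.simps comp_apply GM_add GM_single_poly diag_exp_Suc monom_Suc ac_simps)
  moreover have "below_diag n m d \<alpha> \<beta> (Suc t) ?r"
    using r(1) by (intro below_diag_add below_diag_single below_diag_GM) auto
  ultimately show ?case
    by blast
qed

text \<open>The leading coefficient of the t-th iterate is z^t, a unit of O(S) since S does not
  contain 0.\<close>

lemma diag_single_in_gm_span:
  "c \<in> OS n m \<Longrightarrow> single (diag_exp n m d \<alpha> \<beta> t) c \<in> gm_span n m d (omega n m d \<alpha> \<beta>)"
proof (induction t arbitrary: c rule: less_induct)
  case (less t)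
  obtain r where r: "below_diag n m d \<alpha> \<beta> t r"
    "(GM n m d ^^ t) (omega n m d \<alpha> \<beta>) = single (diag_exp n m d \<alpha> \<beta> t) (Fract (monom 1 t) 1) + r"
    using GM_iterate_omega by blast
  have "r \<in> gm_span n m d (omega n m d \<alpha> \<beta>)"
    using below_diag_in_gm_span[OF r(1)] less.IH by blast
  then have "(GM n m d ^^ t) (omega n m d \<alpha> \<beta>) - r \<in> gm_span n m d (omega n m d \<alpha> \<beta>)"
    by (rule gm_span_diff[OF GM_iterate_in_gm_span])
  then have "single (diag_exp n m d \<alpha> \<beta> t) (Fract (monom 1 t) 1) \<in> gm_span n m d (omega n m d \<alpha> \<beta>)"
    unfolding r(2) by simp
  moreover have "c * Fract 1 (monom 1 t) \<in> OS n m"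
    using less.prems z_power_inverse_in_OS by (rule OS_mult)
  moreover have "Fract (monom (1::complex) t) (monom 1 t) = 1"
    using mult_fract_cancel[of "monom (1::complex) t" 1 1] by (simp add: fract_collapse)
  ultimately show ?case
    using gm_span_scal by (fastforce simp: scal_single mult.assoc eq_fract(1) One_fract_def[symmetric])
qed

section \<open>An induction principle on pairs of integer vectors\<close>

definition cone_measure :: "'a set \<Rightarrow> 'b set \<Rightarrow> nat \<Rightarrow> ('a \<Rightarrow> int) \<Rightarrow> ('b \<Rightarrow> int) \<Rightarrow> nat" where
  "cone_measure I J s k l = (\<Sum>i\<in>I. nat (k i + int s)) + (\<Sum>j\<in>J. nat (l j - int s))"

lemma cone_measure_diag_step:
  "cone_measure I J (Suc s) (\<lambda>i. k i - 1) (\<lambda>j. l j + 1) = cone_measure I J s k l"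
  unfolding cone_measure_def by (intro arg_cong2[where f = "(+)"] sum.cong) auto

lemma cone_measure_lower_x:
  assumes "finite I" "i \<in> I" "- int s < k i"
  shows "cone_measure I J s (k(i := k i - 1)) l < cone_measure I J s k l"
proof -
  have "(\<Sum>x\<in>I. nat ((k(i := k i - 1)) x + int s)) < (\<Sum>x\<in>I. nat (k x + int s))"
    using assms by (intro sum_strict_mono_ex1) auto
  then show ?thesis
    by (simp add: cone_measure_def)
qed

lemma cone_measure_lower_y:
  assumes "finite J" "j \<in> J" "int s < l j"
  shows "cone_measure I J s k (l(j := l j - 1)) < cone_measure I J s k l"
proof -
  have "(\<Sum>y\<in>J. nat ((l(j := l j - 1)) y - int s)) < (\<Sum>y\<in>J. nat (l y - int s))"
    using assms by (intro sum_strict_mono_ex1) auto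
  then show ?thesis
    by (simp add: cone_measure_def)
qed

definition lattice_measure :: "'a set \<Rightarrow> 'b set \<Rightarrow> ('a \<Rightarrow> int) \<Rightarrow> ('b \<Rightarrow> int) \<Rightarrow> nat" where
  "lattice_measure I J k l = (\<Sum>j\<in>J. nat (- l j) + (\<Sum>i\<in>I. nat (- k i - l j)))"

lemma lattice_measure_raise_x:
  assumes "finite I" "finite J" "i \<in> I" "j \<in> J" "k i + l j < 0"
  shows "lattice_measure I J (k(i := k i + 1)) l < lattice_measure I J k l"
  unfolding lattice_measure_def
proof (rule sum_strict_mono_ex1)
  have "(\<Sum>x\<in>I. nat (- (k(i := k i + 1)) x - l j)) < (\<Sum>x\<in>I. nat (- k x - l j))"
    using assms by (intro sum_strict_mono_ex1) auto
  then show "\<exists>y\<in>J. nat (- l y) + (\<Sum>x\<in>I. nat (- (k(i := k i + 1)) x - l y))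
      < nat (- l y) + (\<Sum>x\<in>I. nat (- k x - l y))"
    using assms(4) by auto
qed (auto intro!: sum_mono simp: assms(2))

lemma lattice_measure_raise_y:
  assumes "finite I" "finite J" "j \<in> J" "l j < 0 \<or> (\<exists>i\<in>I. k i + l j < 0)"
  shows "lattice_measure I J k (l(j := l j + 1)) < lattice_measure I J k l"
  unfolding lattice_measure_def
proof (rule sum_strict_mono_ex1)
  have "(\<Sum>x\<in>I. nat (- k x - (l j + 1))) \<le> (\<Sum>x\<in>I. nat (- k x - l j))"
    by (auto intro!: sum_mono)
  moreover have "(\<Sum>x\<in>I. nat (- k x - (l j + 1))) < (\<Sum>x\<in>I. nat (- k x - l j))" if "i \<in> I" "k i + l j < 0" for i
    using that assms(1) by (intro sum_strict_mono_ex1) (auto intro!: bexI[of _ i])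
  ultimately show "\<exists>y\<in>J. nat (- (l(j := l j + 1)) y) + (\<Sum>x\<in>I. nat (- k x - (l(j := l j + 1)) y))
      < nat (- l y) + (\<Sum>x\<in>I. nat (- k x - l y))"
    using assms(3,4) by (intro bexI[OF _ assms(3)]) fastforce
qed (auto intro!: sum_mono add_mono simp: assms(2))

lemma lattice_measure_diag_step:
  assumes "finite J" "j \<in> J" "l j < 0"
  shows "lattice_measure I J (\<lambda>i. k i - 1) (\<lambda>j. l j + 1) < lattice_measure I J k l"
  unfolding lattice_measure_def
  by (rule sum_strict_mono_ex1) (use assms in auto)

context
  fixes I :: "'a set" and J :: "'b set" and Q :: "('a \<Rightarrow> int) \<Rightarrow> ('b \<Rightarrow> int) \<Rightarrow> bool"
  assumes fin: "finite I" "finite J"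
    and cong: "\<And>k l k' l'. \<forall>i\<in>I. k i = k' i \<Longrightarrow> \<forall>j\<in>J. l j = l' j \<Longrightarrow> Q k l \<Longrightarrow> Q k' l'"
    and diag: "\<And>t::nat. Q (\<lambda>_. - int t) (\<lambda>_. int t)"
    and step_x: "\<And>k l i. i \<in> I \<Longrightarrow> Q k l \<Longrightarrow> Q (\<lambda>i. k i - 1) (\<lambda>j. l j + 1) \<Longrightarrow> Q (k(i := k i + 1)) l"
    and step_y: "\<And>k l j. j \<in> J \<Longrightarrow> Q k l \<Longrightarrow> Q (\<lambda>i. k i - 1) (\<lambda>j. l j + 1) \<Longrightarrow> Q k (l(j := l j + 1))"
begin

text \<open>Raising a coordinate of a point needs the point itself and its diagonal neighbour, which lies
  in the cone of s + 1; both have smaller measure.\<close>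

lemma lattice_cone_induct:
  shows "\<forall>i\<in>I. - int s \<le> k i \<Longrightarrow> \<forall>j\<in>J. int s \<le> l j \<Longrightarrow> Q k l"
proof (induction "cone_measure I J s k l" arbitrary: k l s rule: less_induct)
  case (less k l s)
  consider (x) i where "i \<in> I" "- int s < k i" | (y) j where "j \<in> J" "int s < l j"
    | (corner) "\<forall>i\<in>I. k i = - int s" "\<forall>j\<in>J. l j = int s"
    using less.prems by force
  then show ?case
  proof cases
    case x
    let ?k = "k(i := k i - 1)"
    have dec: "cone_measure I J s ?k l < cone_measure I J s k l"
      using fin(1) x by (rule cone_measure_lower_x)
    have "Q ?k l"
      by (rule less.hyps[OF dec]) (use less.prems x in auto)
    moreover have "Q (\<lambda>i. ?k i - 1) (\<lambda>j. l j + 1)"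
    proof (rule less.hyps[of "Suc s"])
      show "cone_measure I J (Suc s) (\<lambda>i. ?k i - 1) (\<lambda>j. l j + 1) < cone_measure I J s k l"
        using dec by (simp only: cone_measure_diag_step)
    qed (use less.prems x in auto)
    ultimately have "Q (?k(i := ?k i + 1)) l"
      by (rule step_x[OF x(1)])
    then show ?thesis
      by simp
  next
    case y
    let ?l = "l(j := l j - 1)"
    have dec: "cone_measure I J s k ?l < cone_measure I J s k l"
      using fin(2) y by (rule cone_measure_lower_y)
    have "Q k ?l"
      by (rule less.hyps[OF dec]) (use less.prems y in auto)
    moreover have "Q (\<lambda>i. k i - 1) (\<lambda>j. ?l j + 1)"
    proof (rule less.hyps[of "Suc s"])
      show "cone_measure I J (Suc s) (\<lambda>i. k i - 1) (\<lambda>j. ?l j + 1) < cone_measure I J s k l"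
        using dec by (simp only: cone_measure_diag_step)
    qed (use less.prems y in auto)
    ultimately have "Q k (?l(j := ?l j + 1))"
      by (rule step_y[OF y(1)])
    then show ?thesis
      by simp
  next
    case corner
    then show ?thesis
      using cong[OF _ _ diag[of s]] by auto
  qed
qed

text \<open>Points outside the cone l \<ge> 0, k_i + l_j \<ge> 0 are reduced by the two backward moves, each
  of which decreases the lattice measure.\<close>

lemma lattice_induct:
  assumes back_y: "\<And>k l j. j \<in> J \<Longrightarrow> Q k (l(j := l j + 1)) \<Longrightarrow> Q (\<lambda>i. k i - 1) (\<lambda>j. l j + 1) \<Longrightarrow> Q k l"
    and back_xy: "\<And>k l i j. i \<in> I \<Longrightarrow> j \<in> J \<Longrightarrow> Q (k(i := k i + 1)) l \<Longrightarrow> Q k (l(j := l j + 1)) \<Longrightarrow> Q k l"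
  shows "Q k l"
proof (induction "lattice_measure I J k l" arbitrary: k l rule: less_induct)
  case (less k l)
  consider (xy) i j where "i \<in> I" "j \<in> J" "k i + l j < 0" | (y) j where "j \<in> J" "l j < 0"
    | (cone) "\<forall>j\<in>J. 0 \<le> l j" "\<forall>i\<in>I. \<forall>j\<in>J. 0 \<le> k i + l j"
    by force
  then show ?case
  proof cases
    case xy
    show ?thesis
    proof (rule back_xy[OF xy(1,2)])
      show "Q (k(i := k i + 1)) l"
        using xy fin by (intro less.hyps lattice_measure_raise_x)
      show "Q k (l(j := l j + 1))"
        using xy fin by (intro less.hyps lattice_measure_raise_y) auto
    qed
  next
    case y
    show ?thesis
    proof (rule back_y[OF y(1)])
      show "Q k (l(j := l j + 1))"
        using y fin by (intro less.hyps lattice_measure_raise_y) auto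
      show "Q (\<lambda>i. k i - 1) (\<lambda>j. l j + 1)"
        using y fin by (intro less.hyps lattice_measure_diag_step)
    qed
  next
    case cone
    define M where "M = Max (insert 0 ((\<lambda>i. - k i) ` I))"
    have M: "0 \<le> M" "\<forall>i\<in>I. - k i \<le> M"
      using fin(1) by (auto simp: M_def intro!: Max_ge)
    then have "\<forall>i\<in>I. - int (nat M) \<le> k i"
      by force
    moreover have "M \<le> l j" if "j \<in> J" for j
      using fin(1) cone that unfolding M_def by (subst Max_le_iff) force+
    then have "\<forall>j\<in>J. int (nat M) \<le> l j"
      using M(1) by simp
    ultimately show ?thesis
      by (rule lattice_cone_induct)
  qed
qed

end

section \<open>Reaching the whole lattice\<close>

definition lattice_monomials_in_span ::
    "nat \<Rightarrow> nat \<Rightarrow> nat \<Rightarrow> (nat \<Rightarrow> rat) \<Rightarrow> (nat \<Rightarrow> rat) \<Rightarrow> (nat \<Rightarrow> int) \<Rightarrow> (nat \<Rightarrow> int) \<Rightarrow> bool" where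
  "lattice_monomials_in_span n m d \<alpha> \<beta> k l \<longleftrightarrow>
     (\<forall>c\<in>OS n m. single (lattice_exp n m d \<alpha> \<beta> k l) c \<in> gm_span n m d (omega n m d \<alpha> \<beta>))"

lemma lattice_monomials_in_span_step_x:
  assumes "d \<ge> 1" "i \<in> {2..n}"
    and "lattice_monomials_in_span n m d \<alpha> \<beta> k l"
    and "lattice_monomials_in_span n m d \<alpha> \<beta> (\<lambda>i. k i - 1) (\<lambda>j. l j + 1)"
  shows "lattice_monomials_in_span n m d \<alpha> \<beta> (k(i := k i + 1)) l"
  unfolding lattice_monomials_in_span_def
proof
  fix c
  assume c: "c \<in> OS n m"
  define e where "e = lattice_exp n m d \<alpha> \<beta> k l"
  let ?a = "cst (of_int (lookup e (Inl i)) / of_nat d) * c"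
  let ?span = "gm_span n m d (omega n m d \<alpha> \<beta>)"
  have rel: "single (single (Inl i) (int d) + e) c + single e ?a - single (fpot_zexp n m d + e) (zc * c) \<in> ?span"
    by (intro exact_top_subset_gm_span exact_relation_x assms(1,2) c) (simp add: e_def keys_lattice_exp)
  have lower: "single e ?a \<in> ?span" "single (fpot_zexp n m d + e) (zc * c) \<in> ?span"
    using assms(3,4) c unfolding lattice_monomials_in_span_def e_def
    by (simp_all add: OS_mult lattice_exp_step_diag)
  have "single (single (Inl i) (int d) + e) c + single e ?a - single (fpot_zexp n m d + e) (zc * c)
      - single e ?a + single (fpot_zexp n m d + e) (zc * c) \<in> ?span"
    using gm_span_add[OF gm_span_diff[OF rel lower(1)] lower(2)] .
  then have "single (single (Inl i) (int d) + e) c \<in> ?span"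
    by simp
  then show "single (lattice_exp n m d \<alpha> \<beta> (k(i := k i + 1)) l) c \<in> ?span"
    by (simp add: lattice_exp_step_x[OF assms(2)] e_def)
qed

lemma lattice_monomials_in_span_step_y:
  assumes "d \<ge> 1" "j \<in> {1..m}"
    and "lattice_monomials_in_span n m d \<alpha> \<beta> k l"
    and "lattice_monomials_in_span n m d \<alpha> \<beta> (\<lambda>i. k i - 1) (\<lambda>j. l j + 1)"
  shows "lattice_monomials_in_span n m d \<alpha> \<beta> k (l(j := l j + 1))"
  unfolding lattice_monomials_in_span_def
proof
  fix c
  assume c: "c \<in> OS n m"
  define e where "e = lattice_exp n m d \<alpha> \<beta> k l"
  let ?a = "cst (of_int (lookup e (Inr j)) / of_nat d) * c"
  let ?span = "gm_span n m d (omega n m d \<alpha> \<beta>)"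
  have rel: "single e ?a - single (single (Inr j) (int d) + e) c + single (fpot_zexp n m d + e) (zc * c) \<in> ?span"
    by (intro exact_top_subset_gm_span exact_relation_y assms(1,2) c) (simp add: e_def keys_lattice_exp)
  have lower: "single e ?a \<in> ?span" "single (fpot_zexp n m d + e) (zc * c) \<in> ?span"
    using assms(3,4) c unfolding lattice_monomials_in_span_def e_def
    by (simp_all add: OS_mult lattice_exp_step_diag)
  have "single e ?a + single (fpot_zexp n m d + e) (zc * c)
      - (single e ?a - single (single (Inr j) (int d) + e) c + single (fpot_zexp n m d + e) (zc * c)) \<in> ?span"
    using gm_span_diff[OF gm_span_add[OF lower] rel] .
  then have "single (single (Inr j) (int d) + e) c \<in> ?span"
    by simp
  then show "single (lattice_exp n m d \<alpha> \<beta> k (l(j := l j + 1))) c \<in> ?span"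
    by (simp add: lattice_exp_step_y[OF assms(2)] e_def)
qed

text \<open>Going back requires solving the relations for the monomial x^e, whose coefficient
  e_v/d is nonzero by non-resonance.\<close>

lemma lattice_monomials_in_span_back_y:
  assumes "d \<ge> 1" "j \<in> {1..m}" "\<not> int d dvd intmul d (\<beta> j)"
    and "lattice_monomials_in_span n m d \<alpha> \<beta> k (l(j := l j + 1))"
    and "lattice_monomials_in_span n m d \<alpha> \<beta> (\<lambda>i. k i - 1) (\<lambda>j. l j + 1)"
  shows "lattice_monomials_in_span n m d \<alpha> \<beta> k l"
  unfolding lattice_monomials_in_span_def
proof
  fix c
  assume c: "c \<in> OS n m"
  define e where "e = lattice_exp n m d \<alpha> \<beta> k l"
  define c' where "c' = cst (of_nat d / of_int (lookup e (Inr j))) * c"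
  let ?span = "gm_span n m d (omega n m d \<alpha> \<beta>)"
  have "lookup e (Inr j) = - intmul d (\<beta> j) + int d * l j"
    using assms(2) by (simp add: e_def lookup_lattice_exp)
  then have "of_int (lookup e (Inr j)) \<noteq> (0::complex)"
    using assms(3) by (metis add.commute dvd_triv_left eq_neg_iff_add_eq_0 of_int_eq_0_iff)
  then have c'_inverse: "cst (of_int (lookup e (Inr j)) / of_nat d) * c' = c"
    unfolding c'_def using assms(1) by (intro cst_divide_cancel) auto
  have c': "c' \<in> OS n m"
    unfolding c'_def using c by (simp add: OS_mult)
  have rel: "single e c - single (single (Inr j) (int d) + e) c' + single (fpot_zexp n m d + e) (zc * c') \<in> ?span"
    using exact_relation_y[OF assms(2) _ c' assms(1), of e] unfolding c'_inverse
    by (intro exact_top_subset_gm_span) (simp add: e_def keys_lattice_exp)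
  have higher: "single (single (Inr j) (int d) + e) c' \<in> ?span" "single (fpot_zexp n m d + e) (zc * c') \<in> ?span"
    using assms(4,5) c' unfolding lattice_monomials_in_span_def e_def
    by (simp_all add: OS_mult lattice_exp_step_diag lattice_exp_step_y[OF assms(2)])
  have "single e c - single (single (Inr j) (int d) + e) c' + single (fpot_zexp n m d + e) (zc * c')
      + single (single (Inr j) (int d) + e) c' - single (fpot_zexp n m d + e) (zc * c') \<in> ?span"
    using gm_span_diff[OF gm_span_add[OF rel higher(1)] higher(2)] .
  then show "single (lattice_exp n m d \<alpha> \<beta> k l) c \<in> ?span"
    by (simp add: e_def)
qed

lemma lattice_monomials_in_span_back_xy:
  assumes "d \<ge> 1" "i \<in> {2..n}" "j \<in> {1..m}" "\<not> int d dvd (intmul d (\<alpha> i) - intmul d (\<beta> j))"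
    and "lattice_monomials_in_span n m d \<alpha> \<beta> (k(i := k i + 1)) l"
    and "lattice_monomials_in_span n m d \<alpha> \<beta> k (l(j := l j + 1))"
  shows "lattice_monomials_in_span n m d \<alpha> \<beta> k l"
  unfolding lattice_monomials_in_span_def
proof
  fix c
  assume c: "c \<in> OS n m"
  define e where "e = lattice_exp n m d \<alpha> \<beta> k l"
  define s where "s = lookup e (Inl i) + lookup e (Inr j)"
  define c' where "c' = cst (of_nat d / of_int s) * c"
  let ?ai = "cst (of_int (lookup e (Inl i)) / of_nat d) * c'"
  let ?aj = "cst (of_int (lookup e (Inr j)) / of_nat d) * c'"
  let ?span = "gm_span n m d (omega n m d \<alpha> \<beta>)"
  have "s = intmul d (\<alpha> i) - intmul d (\<beta> j) + int d * (k i + l j)"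
    using assms(2,3) by (simp add: s_def e_def lookup_lattice_exp algebra_simps)
  then have "of_int s \<noteq> (0::complex)"
    using assms(4) by (metis dvd_minus_iff dvd_triv_left eq_neg_iff_add_eq_0 of_int_eq_0_iff)
  then have "?ai + ?aj = c"
    unfolding c'_def s_def using assms(1)
    by (simp add: cst_add distrib_right[symmetric] add_divide_distrib[symmetric] cst_divide_cancel)
  have c': "c' \<in> OS n m"
    unfolding c'_def using c by (simp add: OS_mult)
  have rel_x: "single (single (Inl i) (int d) + e) c' + single e ?ai - single (fpot_zexp n m d + e) (zc * c') \<in> ?span"
    by (intro exact_top_subset_gm_span exact_relation_x assms(1,2) c') (simp add: e_def keys_lattice_exp)
  have rel_y: "single e ?aj - single (single (Inr j) (int d) + e) c' + single (fpot_zexp n m d + e) (zc * c') \<in> ?span"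
    by (intro exact_top_subset_gm_span exact_relation_y assms(1,3) c') (simp add: e_def keys_lattice_exp)
  have higher: "single (single (Inl i) (int d) + e) c' \<in> ?span" "single (single (Inr j) (int d) + e) c' \<in> ?span"
    using assms(5,6) c' unfolding lattice_monomials_in_span_def e_def
    by (simp_all add: lattice_exp_step_x[OF assms(2)] lattice_exp_step_y[OF assms(3)])
  have "single (single (Inl i) (int d) + e) c' + single e ?ai - single (fpot_zexp n m d + e) (zc * c')
      + (single e ?aj - single (single (Inr j) (int d) + e) c' + single (fpot_zexp n m d + e) (zc * c'))
      - single (single (Inl i) (int d) + e) c' + single (single (Inr j) (int d) + e) c' \<in> ?span"
    using gm_span_add[OF gm_span_diff[OF gm_span_add[OF rel_x rel_y] higher(1)] higher(2)] .
  then show "single (lattice_exp n m d \<alpha> \<beta> k l) c \<in> ?span"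
    using \<open>?ai + ?aj = c\<close> by (simp add: e_def single_add[symmetric])
qed

lemma lattice_monomial_in_gm_span:
  assumes "d \<ge> 1"
    and nonres_y: "\<And>j. j \<in> {1..m} \<Longrightarrow> \<not> int d dvd intmul d (\<beta> j)"
    and nonres_xy: "\<And>i j. i \<in> {2..n} \<Longrightarrow> j \<in> {1..m} \<Longrightarrow> \<not> int d dvd (intmul d (\<alpha> i) - intmul d (\<beta> j))"
    and "c \<in> OS n m"
  shows "single (lattice_exp n m d \<alpha> \<beta> k l) c \<in> gm_span n m d (omega n m d \<alpha> \<beta>)"
proof -
  have "lattice_monomials_in_span n m d \<alpha> \<beta> k l"
  proof (rule lattice_induct[where I = "{2..n}" and J = "{1..m}"])
    show "lattice_monomials_in_span n m d \<alpha> \<beta> k' l'"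
      if "\<forall>i\<in>{2..n}. k i = k' i" "\<forall>j\<in>{1..m}. l j = l' j" "lattice_monomials_in_span n m d \<alpha> \<beta> k l"
      for k l k' l'
      using that lattice_exp_cong[OF that(1,2)] by (simp add: lattice_monomials_in_span_def)
    show "lattice_monomials_in_span n m d \<alpha> \<beta> (\<lambda>_. - int t) (\<lambda>_. int t)" for t
      by (simp add: lattice_monomials_in_span_def diag_single_in_gm_span)
  qed (use assms(1) nonres_y nonres_xy in \<open>blast intro: lattice_monomials_in_span_step_x
      lattice_monomials_in_span_step_y lattice_monomials_in_span_back_y lattice_monomials_in_span_back_xy\<close>)+
  then show ?thesis
    using assms(4) by (simp add: lattice_monomials_in_span_def)
qed

section \<open>The isotypic component\<close>

lemma chi_eq_prod_omega_exp:
  "chi n m d \<alpha> \<beta> \<zeta> = (\<Prod>v\<in>fvars n m. \<zeta> v powi lookup (omega_exp n m d \<alpha> \<beta>) v)"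
proof -
  have "(\<Prod>v\<in>fvars n m. \<zeta> v powi lookup (omega_exp n m d \<alpha> \<beta>) v)
     = (\<Prod>v\<in>Inl ` {2..n}. \<zeta> v powi lookup (omega_exp n m d \<alpha> \<beta>) v)
       * (\<Prod>v\<in>Inr ` {1..m}. \<zeta> v powi lookup (omega_exp n m d \<alpha> \<beta>) v)"
    unfolding fvars_def by (rule prod.union_disjoint) auto
  then show ?thesis
    by (simp add: chi_def prod.reindex lookup_lattice_exp)
qed

lemma omega_in_isotypic: "omega n m d \<alpha> \<beta> \<in> isotypic n m d \<alpha> \<beta>"
  unfolding isotypic_def omega_eq_single
  by (auto simp: single_in_OU keys_lattice_exp gact_single scal_single chi_eq_prod_omega_exp)

lemma powi_eq_power_mod:
  fixes w :: "'a::field"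
  assumes "w ^ d = 1" "d \<ge> 1"
  shows "w powi a = w ^ nat (a mod int d)"
proof -
  have "w \<noteq> 0"
    using assms by (auto simp: power_0_left)
  have "w powi a = w powi (a mod int d) * w powi (int d * (a div int d))"
    by (metis \<open>w \<noteq> 0\<close> mod_mult_div_eq power_int_add mult.commute)
  also have "w powi (int d * (a div int d)) = 1"
    by (simp add: power_int_mult assms(1))
  finally show ?thesis
    using assms(2) by (simp add: power_int_def)
qed

lemma exists_root_of_unity_powi_eq_iff:
  assumes "d \<ge> 1"
  obtains w :: complex where "w ^ d = 1" "\<And>a b. w powi a = w powi b \<longleftrightarrow> a mod int d = b mod int d"
proof
  define w where "w = exp (2 * of_real pi * \<i> * of_nat 1 / of_nat d)"
  show w: "w ^ d = 1"
    using complex_root_unity[of d 1] assms by (simp add: w_def)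
  have power: "w ^ r = exp (2 * of_real pi * \<i> * of_nat r / of_nat d)" for r
    unfolding w_def by (simp add: exp_of_nat_mult[symmetric] algebra_simps)
  have less: "nat (a mod int d) < d" for a
    using assms by (simp add: nat_less_iff)
  fix a b
  have "w powi a = w powi b \<longleftrightarrow> w ^ nat (a mod int d) = w ^ nat (b mod int d)"
    by (simp only: powi_eq_power_mod[OF w assms])
  also have "\<dots> \<longleftrightarrow> nat (a mod int d) mod d = nat (b mod int d) mod d"
    unfolding power by (rule complex_root_unity_eq[OF assms])
  also have "\<dots> \<longleftrightarrow> a mod int d = b mod int d"
    using assms by (simp add: less eq_nat_nat_iff)
  finally show "w powi a = w powi b \<longleftrightarrow> a mod int d = b mod int d" .
qed

lemma lookup_add_mod_eq:
  assumes "\<forall>u. int d dvd lookup k u"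
  shows "lookup (k + e) v mod int d = lookup e v mod int d"
proof -
  obtain t where "lookup k v = int d * t"
    using assms by blast
  then show ?thesis
    by (simp add: lookup_add)
qed

lemma restrict_exps_residue_decomp:
  assumes "d \<ge> 1" "0 \<le> r0" "r0 < int d"
  shows "g - restrict_exps (\<lambda>e. f e mod int d = r0) g
    = (\<Sum>r\<in>{0..<int d} - {r0}. restrict_exps (\<lambda>e. f e mod int d = r) g)"
proof (rule poly_mapping_eqI)
  fix e
  have "(\<Sum>r\<in>{0..<int d} - {r0}. lookup (restrict_exps (\<lambda>e. f e mod int d = r) g) e)
      = (\<Sum>r\<in>{0..<int d} - {r0}. if f e mod int d = r then lookup g e else 0)"
    by (simp add: lookup_restrict_exps)
  also have "\<dots> = (if f e mod int d = r0 then 0 else lookup g e)"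
    using assms by (simp add: sum.delta)
  finally show "lookup (g - restrict_exps (\<lambda>e. f e mod int d = r0) g) e
      = lookup (\<Sum>r\<in>{0..<int d} - {r0}. restrict_exps (\<lambda>e. f e mod int d = r) g) e"
    by (simp add: lookup_minus lookup_restrict_exps lookup_sum)
qed

text \<open>Take zeta = w at the variable v and 1 elsewhere, w a primitive d-th root of unity. It acts on
  the monomials with e_v = r mod d by w^r and on the isotypic component by w^{r0}, so the part of g in
  a residue class r \<noteq> r0 is (w^r - w^{r0})^{-1} times the restriction of an exact form.\<close>

lemma isotypic_residue_part_exact:
  assumes g: "g \<in> isotypic n m d \<alpha> \<beta>" and "v \<in> fvars n m" "d \<ge> 1"
    and r: "0 \<le> r" "r < int d" "r \<noteq> lookup (omega_exp n m d \<alpha> \<beta>) v mod int d"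
  shows "restrict_exps (\<lambda>e. lookup e v mod int d = r) g \<in> exact_top n m d"
proof -
  obtain w :: complex where w: "w ^ d = 1" "\<And>a b. w powi a = w powi b \<longleftrightarrow> a mod int d = b mod int d"
    using exists_root_of_unity_powi_eq_iff[OF assms(3)] by blast
  define \<zeta> where "\<zeta> u = (if u = v then w else 1)" for u
  define C where "C = (\<lambda>e. lookup e v mod int d = r)"
  let ?r0 = "lookup (omega_exp n m d \<alpha> \<beta>) v"
  have character: "(\<Prod>u\<in>fvars n m. \<zeta> u powi lookup e u) = w powi lookup e v" for e
    using assms(2) by (simp add: \<zeta>_def if_distrib[of "\<lambda>x. x powi _"] prod.If_cases Int_absorb1)
  have "\<zeta> \<in> Gset n m d"
    using w(1) by (simp add: Gset_def \<zeta>_def)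
  then have "gact n m \<zeta> g - scal (cst (chi n m d \<alpha> \<beta> \<zeta>)) g \<in> exact_top n m d"
    using g unfolding isotypic_def by blast
  then have "restrict_exps C (gact n m \<zeta> g - scal (cst (chi n m d \<alpha> \<beta> \<zeta>)) g) \<in> exact_top n m d"
    by (rule exact_top_restrict_exps[rotated]) (simp add: C_def lookup_add_mod_eq)
  also have "restrict_exps C (gact n m \<zeta> g - scal (cst (chi n m d \<alpha> \<beta> \<zeta>)) g)
      = scal (cst (w powi r - w powi ?r0)) (restrict_exps C g)"
  proof (rule poly_mapping_eqI)
    fix e
    have "C e \<Longrightarrow> w powi lookup e v = w powi r"
      using r by (simp add: C_def w(2))
    then show "lookup (restrict_exps C (gact n m \<zeta> g - scal (cst (chi n m d \<alpha> \<beta> \<zeta>)) g)) e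
        = lookup (scal (cst (w powi r - w powi ?r0)) (restrict_exps C g)) e"
      by (simp add: lookup_restrict_exps lookup_minus lookup_gact lookup_scal character
          chi_eq_prod_omega_exp cst_diff[symmetric] algebra_simps)
  qed
  finally have "scal (cst (1 / (w powi r - w powi ?r0))) (scal (cst (w powi r - w powi ?r0)) (restrict_exps C g))
      \<in> exact_top n m d"
    by (rule exact_top_scal[OF cst_in_OS])
  moreover have "w powi r \<noteq> w powi ?r0"
    using r by (simp add: w(2))
  ultimately show ?thesis
    by (simp add: scal_scal cst_mult C_def)
qed

lemma isotypic_minus_residue_class_exact:
  assumes g: "g \<in> isotypic n m d \<alpha> \<beta>" and "d \<ge> 1"
  shows "g - restrict_exps (\<lambda>e. \<forall>v\<in>fvars n m. lookup e v mod int d = lookup (omega_exp n m d \<alpha> \<beta>) v mod int d) g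
    \<in> exact_top n m d"
proof -
  let ?C = "\<lambda>A e. \<forall>v\<in>A. lookup e v mod int d = lookup (omega_exp n m d \<alpha> \<beta>) v mod int d"
  have "g - restrict_exps (?C A) g \<in> exact_top n m d" if "A \<subseteq> fvars n m" for A
    using finite_subset[OF that finite_fvars] that
  proof (induction A rule: finite_induct)
    case empty
    then show ?case
      by simp
  next
    case (insert v A)
    let ?r0 = "lookup (omega_exp n m d \<alpha> \<beta>) v mod int d"
    have "g - restrict_exps (\<lambda>e. lookup e v mod int d = ?r0) g
        = (\<Sum>r\<in>{0..<int d} - {?r0}. restrict_exps (\<lambda>e. lookup e v mod int d = r) g)"
      using assms(2) by (intro restrict_exps_residue_decomp) auto
    also have "\<dots> \<in> exact_top n m d"
      using insert.prems by (intro exact_top_sum isotypic_residue_part_exact[OF g _ assms(2)]) auto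
    finally have "restrict_exps (?C A) (g - restrict_exps (\<lambda>e. lookup e v mod int d = ?r0) g) \<in> exact_top n m d"
      by (rule exact_top_restrict_exps[rotated]) (simp add: lookup_add_mod_eq)
    with insert have "(g - restrict_exps (?C A) g)
        + restrict_exps (?C A) (g - restrict_exps (\<lambda>e. lookup e v mod int d = ?r0) g) \<in> exact_top n m d"
      by (simp add: exact_top_add)
    also have "(g - restrict_exps (?C A) g)
        + restrict_exps (?C A) (g - restrict_exps (\<lambda>e. lookup e v mod int d = ?r0) g)
        = g - restrict_exps (?C (insert v A)) g"
      by (rule poly_mapping_eqI) (simp add: lookup_restrict_exps lookup_minus lookup_add)
    finally show ?case .
  qed
  then show ?thesis
    by blast
qed

lemma residue_class_exp_eq_lattice_exp:
  assumes "keys e \<subseteq> fvars n m"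
    and "\<forall>v\<in>fvars n m. lookup e v mod int d = lookup (omega_exp n m d \<alpha> \<beta>) v mod int d"
  shows "\<exists>k l. e = lattice_exp n m d \<alpha> \<beta> k l"
proof (intro exI poly_mapping_eqI)
  fix v
  show "lookup e v = lookup (lattice_exp n m d \<alpha> \<beta> (\<lambda>i. (lookup e (Inl i) - intmul d (\<alpha> i)) div int d)
      (\<lambda>j. (lookup e (Inr j) + intmul d (\<beta> j)) div int d)) v"
  proof (cases "v \<in> fvars n m")
    case False
    then show ?thesis
      using assms(1) by (cases v) (auto simp: lookup_lattice_exp fvars_def in_keys_iff)
  next
    case True
    then have "int d dvd lookup e v - lookup (omega_exp n m d \<alpha> \<beta>) v"
      using assms(2) by (simp add: mod_eq_dvd_iff)
    then show ?thesis
      using True by (cases v) (auto simp: lookup_lattice_exp fvars_def dvd_mult_div_cancel)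
  qed
qed

lemma isotypic_subset_gm_span:
  assumes "d \<ge> 1"
    and "\<And>j. j \<in> {1..m} \<Longrightarrow> \<not> int d dvd intmul d (\<beta> j)"
    and "\<And>i j. i \<in> {2..n} \<Longrightarrow> j \<in> {1..m} \<Longrightarrow> \<not> int d dvd (intmul d (\<alpha> i) - intmul d (\<beta> j))"
    and g: "g \<in> isotypic n m d \<alpha> \<beta>"
  shows "g \<in> gm_span n m d (omega n m d \<alpha> \<beta>)"
proof -
  let ?C = "\<lambda>e. \<forall>v\<in>fvars n m. lookup e v mod int d = lookup (omega_exp n m d \<alpha> \<beta>) v mod int d"
  have gOU: "g \<in> OU n m"
    using g unfolding isotypic_def by blast
  have "single e (lookup (restrict_exps ?C g) e) \<in> gm_span n m d (omega n m d \<alpha> \<beta>)"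
    if "e \<in> keys (restrict_exps ?C g)" for e
  proof -
    have "?C e" "e \<in> keys g"
      using that by (auto simp: in_keys_iff lookup_restrict_exps split: if_splits)
    then obtain k l where "e = lattice_exp n m d \<alpha> \<beta> k l"
      using residue_class_exp_eq_lattice_exp OU_keys[OF gOU] by blast
    moreover have "single (lattice_exp n m d \<alpha> \<beta> k l) (lookup (restrict_exps ?C g) e)
        \<in> gm_span n m d (omega n m d \<alpha> \<beta>)"
      by (rule lattice_monomial_in_gm_span[OF assms(1)])
         (use assms(2,3) OU_lookup[OF restrict_exps_in_OU[OF gOU]] in auto)
    ultimately show ?thesis
      by simp
  qed
  then have "restrict_exps ?C g \<in> gm_span n m d (omega n m d \<alpha> \<beta>)"
    by (subst poly_mapping_sum_single) (rule gm_span_sum)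
  moreover have "g - restrict_exps ?C g \<in> gm_span n m d (omega n m d \<alpha> \<beta>)"
    using isotypic_minus_residue_class_exact[OF g assms(1)] by (rule exact_top_subset_gm_span)
  ultimately show ?thesis
    using gm_span_add by fastforce
qed

lemma of_int_intmul: "of_nat d * r \<in> \<int> \<Longrightarrow> of_int (intmul d r) = of_nat d * r"
  unfolding intmul_def by (metis Ints_cases floor_of_int)

lemma not_dvd_intmul_diff:
  assumes "d \<ge> 1" "of_nat d * r \<in> \<int>" "of_nat d * s \<in> \<int>" "r - s \<notin> \<int>"
  shows "\<not> int d dvd (intmul d r - intmul d s)"
proof
  assume "int d dvd (intmul d r - intmul d s)"
  then obtain t where t: "intmul d r - intmul d s = int d * t"
    by blast
  have "of_nat d * (r - s) = of_nat d * (of_int t :: rat)"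
    using of_int_intmul[OF assms(2)] of_int_intmul[OF assms(3)] arg_cong[OF t, of "of_int :: int \<Rightarrow> rat"]
    by (simp add: algebra_simps)
  then have "r - s = of_int t"
    using assms(1) by simp
  with assms(4) show False
    by simp
qed

theorem proposition2p13:
  fixes n m d :: nat and \<alpha> \<beta> :: "nat \<Rightarrow> rat"
  assumes "m \<le> n" and "1 \<le> n"
    and "\<forall>i j. 1 \<le> i \<and> i \<le> j \<and> j \<le> n \<longrightarrow> \<alpha> i \<le> \<alpha> j"
    and "\<forall>i j. 1 \<le> i \<and> i \<le> j \<and> j \<le> m \<longrightarrow> \<beta> i \<le> \<beta> j"
    and "\<alpha> 1 = 0"
    and "\<forall>i\<in>{1..n}. \<forall>j\<in>{1..m}. \<alpha> i - \<beta> j \<notin> \<int>"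
    and "1 \<le> d"
    and "\<forall>i\<in>{1..n}. of_nat d * \<alpha> i \<in> \<int>"
    and "\<forall>j\<in>{1..m}. of_nat d * \<beta> j \<in> \<int>"
  shows "cyclic_vector n m d \<alpha> \<beta> (omega n m d \<alpha> \<beta>)"
proof -
  \<comment> \<open>m \<le> n and the monotonicity of alpha and beta are normalisations that the argument does not need.\<close>
  have nonres_xy: "\<not> int d dvd (intmul d (\<alpha> i) - intmul d (\<beta> j))" if "i \<in> {1..n}" "j \<in> {1..m}" for i j
    using that assms(6-9) by (intro not_dvd_intmul_diff) auto
  have "\<not> int d dvd intmul d (\<beta> j)" if "j \<in> {1..m}" for j
    using nonres_xy[of 1 j] that assms(2,5) by (simp add: intmul_def)
  moreover have "\<not> int d dvd (intmul d (\<alpha> i) - intmul d (\<beta> j))" if "i \<in> {2..n}" "j \<in> {1..m}" for i j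
    using nonres_xy that by simp
  ultimately have "isotypic n m d \<alpha> \<beta> \<subseteq> gm_span n m d (omega n m d \<alpha> \<beta>)"
    using isotypic_subset_gm_span[OF assms(7)] by blast
  then show ?thesis
    using omega_in_isotypic unfolding cyclic_vector_def gm_span_def by blast
qed

end
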